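(* Let $\mathcal{O}=(X_{\min},X_{\max})$ be bounded, $T>0$, and let $a=\tfrac12\sigma^2$, $b$, $r$ be bounded functions on $(0,T)\times\mathcal{O}$ with $a(t,x)\ge\eta_0>0$ and $|a(t,x)-a(t,y)|\le L|x-y|$ for all $t\in(0,T)$, $x,y\in\mathcal{O}$. For $J\ge1$, $h=\frac{X_{\max}-X_{\min}}{J+1}$, $x_j=X_{\min}+jh$, and a fixed time $t$, write $a_j=a(t,x_j)$, $b_j=b(t,x_j)$, $r_j=r(t,x_j)$, and let $\tilde A$ be the $J\times J$ matrix defined by, for $x\in\mathbb{R}^J$ extended by $x_{-1}=x_0=x_{J+1}=x_{J+2}=0$, $$(\tilde Ax)_j=a_j\Big[\tfrac{-x_{j-1}+2x_j-x_{j+1}}{h^2}+\tfrac{x_{j-2}-4x_{j-1}+6x_j-4x_{j+1}+x_{j+2}}{12h^2}\Big]+b_j\Big[\tfrac{x_{j+1}-x_{j-1}}{2h}+\tfrac{x_{j-2}-2x_{j-1}+2x_{j+1}-x_{j+2}}{12h}\Big]+r_jx_j,$$ $j=1,\dots,J$ (the fourth-order finite difference approximation of $-a w_{xx}+b w_x+r w$). Then there exist $\eta_2>0$ and $\gamma_2\ge0$, independent of $J$, $h$ and $t$, such that for all $x\in\mathbb{R}^J$, $$\langle x,\tilde Ax\rangle\ge\eta_2N(x/h)^2-\gamma_2\|x\|_2^2,$$ where $N(x):=\big(\sum_{j=1}^{J+1}|x_j-x_{j-1}|^2\big)^{1/2}$ with $x_0=x_{J+1}=0$.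
   Context: $\langle\cdot,\cdot\rangle$ and $\|\cdot\|_2$ denote the Euclidean inner product and norm on $\mathbb{R}^J$. *)

theory Defs
  imports Complex_Main
begin

text \<open>Vectors in R^J are represented as functions x :: int => real, of which only the
  entries x 1, ..., x J are relevant. ext J x is the extension by zero outside 1..J
  (in particular x_{-1} = x_0 = x_{J+1} = x_{J+2} = 0).\<close>

definition ext :: "nat \<Rightarrow> (int \<Rightarrow> real) \<Rightarrow> int \<Rightarrow> real" where
  "ext J x j = (if 1 \<le> j \<and> j \<le> int J then x j else 0)"

definition mesh :: "real \<Rightarrow> real \<Rightarrow> nat \<Rightarrow> real" where
  "mesh Xmin Xmax J = (Xmax - Xmin) / (real J + 1)"

definition grid :: "real \<Rightarrow> real \<Rightarrow> nat \<Rightarrow> int \<Rightarrow> real" where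
  "grid Xmin Xmax J j = Xmin + real_of_int j * mesh Xmin Xmax J"

definition Atilde ::
  "(real \<Rightarrow> real \<Rightarrow> real) \<Rightarrow> (real \<Rightarrow> real \<Rightarrow> real) \<Rightarrow> (real \<Rightarrow> real \<Rightarrow> real) \<Rightarrow>
   real \<Rightarrow> real \<Rightarrow> nat \<Rightarrow> real \<Rightarrow> (int \<Rightarrow> real) \<Rightarrow> int \<Rightarrow> real" where
  "Atilde a b r Xmin Xmax J t x j =
    (let h = mesh Xmin Xmax J; xj = grid Xmin Xmax J j; y = ext J x in
      a t xj * ((- y (j - 1) + 2 * y j - y (j + 1)) / h\<^sup>2
                + (y (j - 2) - 4 * y (j - 1) + 6 * y j - 4 * y (j + 1) + y (j + 2)) / (12 * h\<^sup>2))
    + b t xj * ((y (j + 1) - y (j - 1)) / (2 * h)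
                + (y (j - 2) - 2 * y (j - 1) + 2 * y (j + 1) - y (j + 2)) / (12 * h))
    + r t xj * y j)"

definition innerJ :: "nat \<Rightarrow> (int \<Rightarrow> real) \<Rightarrow> (int \<Rightarrow> real) \<Rightarrow> real" where
  "innerJ J x y = (\<Sum>j = 1..int J. x j * y j)"

definition normJ_sq :: "nat \<Rightarrow> (int \<Rightarrow> real) \<Rightarrow> real" where
  "normJ_sq J x = (\<Sum>j = 1..int J. (x j)\<^sup>2)"

definition Nnorm :: "nat \<Rightarrow> (int \<Rightarrow> real) \<Rightarrow> real" where
  "Nnorm J x = sqrt (\<Sum>j = 1..int J + 1. \<bar>ext J x j - ext J x (j - 1)\<bar>\<^sup>2)"

end

theory Submission
  imports Defs
begin

text \<open>Summation by parts, with all sums boundary-free because the zero-extended vector vanishes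
  outside 1..J, rewrites \<open>\<langle>x, \<tilde>A x\<rangle>\<close> as a sum of local terms. The second-difference part becomes
  \<open>\<Sum> a\<^sub>j (x\<^sub>j - x\<^sub>j\<^sub>-\<^sub>1)\<^sup>2\<close> plus a commutator whose coefficients \<open>a\<^sub>j - a\<^sub>j\<^sub>-\<^sub>1\<close> are O(h) by the
  Lipschitz bound; the fourth-difference part becomes a nonnegative sum plus a similar commutator.
  Young's inequality absorbs both commutators into half of the diffusion and a multiple of
  \<open>\<parallel>x\<parallel>\<^sup>2\<close>. The fourth-order first-derivative stencil is a combination of four consecutive first
  differences, so the convection term costs another quarter of the diffusion, leaving
  \<open>\<eta>0/4 N(x/h)\<^sup>2 - \<gamma>\<^sub>2 \<parallel>x\<parallel>\<^sup>2\<close>.\<close>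

definition bdiff :: "(int \<Rightarrow> real) \<Rightarrow> int \<Rightarrow> real" where
  "bdiff y j = y j - y (j - 1)"

definition diff2 :: "(int \<Rightarrow> real) \<Rightarrow> int \<Rightarrow> real" where
  "diff2 y j = y (j - 1) - 2 * y j + y (j + 1)"

definition central_diff :: "(int \<Rightarrow> real) \<Rightarrow> int \<Rightarrow> real" where
  "central_diff y j = (y (j - 2) - 8 * y (j - 1) + 8 * y (j + 1) - y (j + 2)) / 12"

definition fd4_op ::
  "real \<Rightarrow> (int \<Rightarrow> real) \<Rightarrow> (int \<Rightarrow> real) \<Rightarrow> (int \<Rightarrow> real) \<Rightarrow> (int \<Rightarrow> real) \<Rightarrow> int \<Rightarrow> real" where
  "fd4_op h \<alpha> \<beta> \<rho> y j =
     \<alpha> j * (diff2 (diff2 y) j / (12 * h\<^sup>2) - diff2 y j / h\<^sup>2) + \<beta> j * (central_diff y j / h) + \<rho> j * y j"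

lemma diff2_eq_bdiff: "diff2 y j = bdiff y (j + 1) - bdiff y j"
  by (simp add: diff2_def bdiff_def)

lemma sum_int_shift:
  fixes f :: "int \<Rightarrow> 'a::comm_monoid_add"
  assumes "\<And>j. j \<notin> {lo..hi} \<Longrightarrow> f j = 0" and "\<And>j. j \<notin> {lo..hi} \<Longrightarrow> f (j + k) = 0"
  shows "(\<Sum>j=lo..hi. f (j + k)) = (\<Sum>j=lo..hi. f j)"
proof -
  have "(\<Sum>j=lo..hi. f (j + k)) = (\<Sum>j=lo+k..hi+k. f j)"
    using sum.reindex[of "\<lambda>j. j + k" "{lo..hi}" f] by (simp add: inj_on_def)
  also have "\<dots> = (\<Sum>j\<in>{lo..hi} \<union> {lo+k..hi+k}. f j)"
  proof (rule sum.mono_neutral_left)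
    show "\<forall>j\<in>{lo..hi} \<union> {lo+k..hi+k} - {lo+k..hi+k}. f j = 0"
      using assms(2)[of "_ - k"] by auto
  qed auto
  also have "\<dots> = (\<Sum>j=lo..hi. f j)"
    by (rule sum.mono_neutral_right) (use assms(1) in auto)
  finally show ?thesis .
qed

lemma sum_by_parts_int:
  fixes u w :: "int \<Rightarrow> real"
  assumes "\<And>j. j \<notin> {lo+1..hi-1} \<Longrightarrow> u j = 0"
  shows "(\<Sum>j=lo..hi. u j * (w j - w (j + 1))) = (\<Sum>j=lo..hi. bdiff u j * w j)"
proof -
  have "(\<Sum>j=lo..hi. u (j + 1 - 1) * w (j + 1)) = (\<Sum>j=lo..hi. u (j - 1) * w j)"
    by (rule sum_int_shift[where f = "\<lambda>j. u (j - 1) * w j"]) (auto simp: assms)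
  then show ?thesis
    by (simp add: bdiff_def algebra_simps sum_subtractf)
qed

lemma sum_diff2_by_parts:
  fixes u v :: "int \<Rightarrow> real"
  assumes "\<And>j. j \<notin> {lo+1..hi-1} \<Longrightarrow> u j = 0"
  shows "(\<Sum>j=lo..hi. u j * diff2 v j) = - (\<Sum>j=lo..hi. bdiff u j * bdiff v j)"
proof -
  have "u j * diff2 v j = - (u j * (bdiff v j - bdiff v (j + 1)))" for j
    by (simp add: diff2_eq_bdiff algebra_simps)
  then show ?thesis
    using sum_by_parts_int[of lo hi u "bdiff v"] assms by (simp add: sum_negf)
qed

lemma sum_diff2_symmetric:
  fixes u v :: "int \<Rightarrow> real"
  assumes "\<And>j. j \<notin> {lo+1..hi-1} \<Longrightarrow> u j = 0" and "\<And>j. j \<notin> {lo+1..hi-1} \<Longrightarrow> v j = 0"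
  shows "(\<Sum>j=lo..hi. u j * diff2 v j) = (\<Sum>j=lo..hi. diff2 u j * v j)"
  using sum_diff2_by_parts[of lo hi u v] sum_diff2_by_parts[of lo hi v u] assms
  by (simp add: mult.commute)

lemma abs_mult_le_Young:
  fixes u v \<epsilon> :: real
  assumes "\<epsilon> > 0"
  shows "\<bar>u * v\<bar> \<le> \<epsilon> * u\<^sup>2 + v\<^sup>2 / (4 * \<epsilon>)"
proof -
  have "0 \<le> (2 * \<epsilon> * \<bar>u\<bar> - \<bar>v\<bar>)\<^sup>2" by simp
  then have "4 * \<epsilon> * \<bar>u * v\<bar> \<le> 4 * \<epsilon> * (\<epsilon> * u\<^sup>2) + v\<^sup>2"
    by (simp add: power2_eq_square algebra_simps abs_mult)
  then show ?thesis using assms by (simp add: field_simps)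
qed

lemma central_diff_eq_bdiff:
  "central_diff y j = (7 * (bdiff y j + bdiff y (j + 1)) - bdiff y (j - 1) - bdiff y (j + 2)) / 12"
  by (simp add: central_diff_def bdiff_def algebra_simps)

lemma central_diff_sq_le:
  "(central_diff y j)\<^sup>2 \<le> (bdiff y (j - 1))\<^sup>2 + (bdiff y j)\<^sup>2 + (bdiff y (j + 1))\<^sup>2 + (bdiff y (j + 2))\<^sup>2"
proof -
  obtain p q u v where pquv: "p = bdiff y (j - 1)" "q = bdiff y j" "u = bdiff y (j + 1)" "v = bdiff y (j + 2)"
    by blast
  \<comment> \<open>Lagrange's identity for the coefficients (-1, 7, 7, -1), of squared length 100 \<le> 144\<close>
  have "0 \<le> (7*p + q)\<^sup>2 + (7*p + u)\<^sup>2 + (p - v)\<^sup>2 + (7*u - 7*q)\<^sup>2 + (q + 7*v)\<^sup>2 + (u + 7*v)\<^sup>2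
            + 44 * (p\<^sup>2 + q\<^sup>2 + u\<^sup>2 + v\<^sup>2)"
    by simp
  then have "(7 * (q + u) - p - v)\<^sup>2 \<le> 144 * (p\<^sup>2 + q\<^sup>2 + u\<^sup>2 + v\<^sup>2)"
    by (simp add: power2_eq_square algebra_simps)
  then show ?thesis
    by (simp add: central_diff_eq_bdiff pquv power_divide)
qed

lemma power2_mult_le_of_abs_le:
  fixes d K z :: real
  assumes "\<bar>d\<bar> \<le> K"
  shows "(d * z)\<^sup>2 \<le> K\<^sup>2 * z\<^sup>2"
proof -
  have "\<bar>d\<bar> \<le> \<bar>K\<bar>" using assms by linarith
  then have "d\<^sup>2 \<le> K\<^sup>2" by (simp add: abs_le_square_iff)
  then show ?thesis by (simp add: power_mult_distrib mult_right_mono)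
qed

lemma power2_sum_le_twice:
  fixes p q :: real
  shows "(p + q)\<^sup>2 \<le> 2 * p\<^sup>2 + 2 * q\<^sup>2"
  using zero_le_power2[of "p - q"] by (simp add: power2_eq_square algebra_simps)

lemma bdiff_mult:
  "bdiff (\<lambda>j. \<alpha> j * y j) j * bdiff y j
     = \<alpha> j * (bdiff y j)\<^sup>2 + (\<alpha> j - \<alpha> (j - 1)) * y (j - 1) * bdiff y j"
  by (simp add: bdiff_def power2_eq_square algebra_simps)

lemma diff2_mult:
  "diff2 (\<lambda>j. \<alpha> j * y j) j
     = \<alpha> j * diff2 y j + ((\<alpha> (j - 1) - \<alpha> j) * y (j - 1) + (\<alpha> (j + 1) - \<alpha> j) * y (j + 1))"
  by (simp add: diff2_def algebra_simps)

lemma sum_mult_fd4_op: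
  "(\<Sum>j\<in>A. y j * fd4_op h \<alpha> \<beta> \<rho> y j)
    = (\<Sum>j\<in>A. \<alpha> j * y j * - diff2 y j) / h\<^sup>2 + (\<Sum>j\<in>A. \<alpha> j * y j * diff2 (diff2 y) j) / (12 * h\<^sup>2)
      + (\<Sum>j\<in>A. \<beta> j * y j * central_diff y j) / h + (\<Sum>j\<in>A. \<rho> j * (y j)\<^sup>2)"
proof -
  have "y j * fd4_op h \<alpha> \<beta> \<rho> y j
      = \<alpha> j * y j * - diff2 y j / h\<^sup>2 + \<alpha> j * y j * diff2 (diff2 y) j / (12 * h\<^sup>2)
        + \<beta> j * y j * central_diff y j / h + \<rho> j * (y j)\<^sup>2" for j
    by (simp add: fd4_op_def power2_eq_square algebra_simps add_divide_distrib diff_divide_distrib)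
  then show ?thesis
    by (simp only: sum.distrib sum_divide_distrib)
qed

context
  fixes lo hi :: int and y :: "int \<Rightarrow> real"
  assumes y_vanishes: "\<And>j. j \<notin> {lo+2..hi-2} \<Longrightarrow> y j = 0"
begin

lemma y_vanishes_inner: "j \<notin> {lo+1..hi-1} \<Longrightarrow> y j = 0"
  using y_vanishes by auto

lemma sum_sq_shift:
  assumes "\<bar>k\<bar> \<le> 2"
  shows "(\<Sum>j=lo..hi. (y (j + k))\<^sup>2) = (\<Sum>j=lo..hi. (y j)\<^sup>2)"
proof (rule sum_int_shift)
  fix j assume "j \<notin> {lo..hi}"
  then have "j \<notin> {lo+2..hi-2}" "j + k \<notin> {lo+2..hi-2}" using assms by auto
  then show "(y j)\<^sup>2 = 0" "(y (j + k))\<^sup>2 = 0" using y_vanishes by simp_all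
qed

lemma sum_bdiff_sq_shift:
  assumes "-1 \<le> k" "k \<le> 2"
  shows "(\<Sum>j=lo..hi. (bdiff y (j + k))\<^sup>2) = (\<Sum>j=lo..hi. (bdiff y j)\<^sup>2)"
proof -
  have "bdiff y j = 0" if "j \<notin> {lo+2..hi-1}" for j
    using that y_vanishes[of j] y_vanishes[of "j - 1"] by (auto simp: bdiff_def)
  moreover have "j \<notin> {lo+2..hi-1}" "j + k \<notin> {lo+2..hi-1}" if "j \<notin> {lo..hi}" for j
    using that assms by auto
  ultimately show ?thesis
    by (intro sum_int_shift) simp_all
qed

lemma sum_diffusion_lower_bound:
  assumes "\<eta> > 0" and "\<And>j. \<eta> \<le> \<alpha> j" and "\<And>j. \<bar>\<alpha> j - \<alpha> (j - 1)\<bar> \<le> K"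
  shows "(\<Sum>j=lo..hi. \<alpha> j * y j * - diff2 y j)
           \<ge> \<eta> / 2 * (\<Sum>j=lo..hi. (bdiff y j)\<^sup>2) - K\<^sup>2 / (2 * \<eta>) * (\<Sum>j=lo..hi. (y j)\<^sup>2)"
proof -
  have pointwise: "\<eta> / 2 * (bdiff y j)\<^sup>2 - K\<^sup>2 / (2 * \<eta>) * (y (j - 1))\<^sup>2
      \<le> \<alpha> j * (bdiff y j)\<^sup>2 + (\<alpha> j - \<alpha> (j - 1)) * y (j - 1) * bdiff y j" for j
  proof -
    define w where "w = (\<alpha> j - \<alpha> (j - 1)) * y (j - 1)"
    have "\<bar>bdiff y j * w\<bar> \<le> \<eta> / 2 * (bdiff y j)\<^sup>2 + w\<^sup>2 / (2 * \<eta>)"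
      using abs_mult_le_Young[of "\<eta> / 2"] assms(1) by simp
    moreover have "w\<^sup>2 / (2 * \<eta>) \<le> K\<^sup>2 / (2 * \<eta>) * (y (j - 1))\<^sup>2"
      using power2_mult_le_of_abs_le[OF assms(3)] assms(1)
      by (simp add: w_def divide_right_mono)
    moreover have "\<eta> * (bdiff y j)\<^sup>2 \<le> \<alpha> j * (bdiff y j)\<^sup>2"
      using assms(2) by (simp add: mult_right_mono)
    moreover have "(\<alpha> j - \<alpha> (j - 1)) * y (j - 1) * bdiff y j = bdiff y j * w"
      by (simp add: w_def)
    moreover have "\<eta> / 2 * (bdiff y j)\<^sup>2 = \<eta> * (bdiff y j)\<^sup>2 / 2"
      by simp
    ultimately show ?thesis
      using abs_ge_minus_self[of "bdiff y j * w"] by linarith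
  qed
  have "\<eta> / 2 * (\<Sum>j=lo..hi. (bdiff y j)\<^sup>2) - K\<^sup>2 / (2 * \<eta>) * (\<Sum>j=lo..hi. (y j)\<^sup>2)
      = (\<Sum>j=lo..hi. \<eta> / 2 * (bdiff y j)\<^sup>2 - K\<^sup>2 / (2 * \<eta>) * (y (j - 1))\<^sup>2)"
    using sum_sq_shift[of "-1"] by (simp only: sum_subtractf flip: sum_distrib_left) simp
  also have "\<dots> \<le> (\<Sum>j=lo..hi. \<alpha> j * (bdiff y j)\<^sup>2 + (\<alpha> j - \<alpha> (j - 1)) * y (j - 1) * bdiff y j)"
    by (rule sum_mono) (rule pointwise)
  also have "\<dots> = (\<Sum>j=lo..hi. \<alpha> j * y j * - diff2 y j)"
  proof -
    have "(\<Sum>j=lo..hi. \<alpha> j * y j * diff2 y j) = - (\<Sum>j=lo..hi. bdiff (\<lambda>j. \<alpha> j * y j) j * bdiff y j)"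
      by (rule sum_diff2_by_parts) (simp add: y_vanishes_inner)
    then show ?thesis by (simp add: bdiff_mult sum_negf)
  qed
  finally show ?thesis .
qed

lemma sum_fourth_order_lower_bound:
  assumes "\<eta> > 0" and "\<And>j. \<eta> \<le> \<alpha> j" and "\<And>j. \<bar>\<alpha> j - \<alpha> (j - 1)\<bar> \<le> K"
  shows "(\<Sum>j=lo..hi. \<alpha> j * y j * diff2 (diff2 y) j) \<ge> - K\<^sup>2 / \<eta> * (\<Sum>j=lo..hi. (y j)\<^sup>2)"
proof -
  define w where "w j = (\<alpha> (j - 1) - \<alpha> j) * y (j - 1) + (\<alpha> (j + 1) - \<alpha> j) * y (j + 1)" for j
  have pointwise: "- K\<^sup>2 / (2 * \<eta>) * ((y (j - 1))\<^sup>2 + (y (j + 1))\<^sup>2)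
      \<le> \<alpha> j * (diff2 y j)\<^sup>2 + diff2 y j * w j" for j
  proof -
    have "\<bar>diff2 y j * w j\<bar> \<le> \<eta> * (diff2 y j)\<^sup>2 + (w j)\<^sup>2 / (4 * \<eta>)"
      using abs_mult_le_Young assms(1) by blast
    moreover have "(w j)\<^sup>2 / (4 * \<eta>) \<le> K\<^sup>2 / (2 * \<eta>) * ((y (j - 1))\<^sup>2 + (y (j + 1))\<^sup>2)"
    proof -
      have "(w j)\<^sup>2 \<le> 2 * ((\<alpha> (j - 1) - \<alpha> j) * y (j - 1))\<^sup>2 + 2 * ((\<alpha> (j + 1) - \<alpha> j) * y (j + 1))\<^sup>2"
        unfolding w_def by (rule power2_sum_le_twice)
      also have "\<dots> \<le> 2 * (K\<^sup>2 * (y (j - 1))\<^sup>2) + 2 * (K\<^sup>2 * (y (j + 1))\<^sup>2)"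
        using assms(3)[of j] assms(3)[of "j + 1"]
        by (intro add_mono mult_left_mono power2_mult_le_of_abs_le) (simp_all add: abs_minus_commute)
      finally have "(w j)\<^sup>2 / (4 * \<eta>) \<le> (2 * (K\<^sup>2 * (y (j - 1))\<^sup>2) + 2 * (K\<^sup>2 * (y (j + 1))\<^sup>2)) / (4 * \<eta>)"
        using assms(1) by (simp add: divide_right_mono)
      also have "\<dots> = K\<^sup>2 / (2 * \<eta>) * ((y (j - 1))\<^sup>2 + (y (j + 1))\<^sup>2)"
        using assms(1) by (simp add: field_simps)
      finally show ?thesis .
    qed
    moreover have "\<eta> * (diff2 y j)\<^sup>2 \<le> \<alpha> j * (diff2 y j)\<^sup>2"
      using assms(2) by (simp add: mult_right_mono)
    ultimately show ?thesis
      using abs_ge_minus_self[of "diff2 y j * w j"] by linarith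
  qed
  have "- K\<^sup>2 / \<eta> * (\<Sum>j=lo..hi. (y j)\<^sup>2)
      = (\<Sum>j=lo..hi. - K\<^sup>2 / (2 * \<eta>) * ((y (j - 1))\<^sup>2 + (y (j + 1))\<^sup>2))"
    using sum_sq_shift[of "-1"] sum_sq_shift[of 1]
    by (simp only: sum.distrib flip: sum_distrib_left) simp
  also have "\<dots> \<le> (\<Sum>j=lo..hi. \<alpha> j * (diff2 y j)\<^sup>2 + diff2 y j * w j)"
    by (rule sum_mono) (rule pointwise)
  also have "\<dots> = (\<Sum>j=lo..hi. \<alpha> j * y j * diff2 (diff2 y) j)"
  proof -
    have "diff2 y j = 0" if "j \<notin> {lo+1..hi-1}" for j
      using that y_vanishes[of "j - 1"] y_vanishes[of j] y_vanishes[of "j + 1"]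
      by (auto simp: diff2_def)
    then have "(\<Sum>j=lo..hi. \<alpha> j * y j * diff2 (diff2 y) j)
        = (\<Sum>j=lo..hi. diff2 (\<lambda>j. \<alpha> j * y j) j * diff2 y j)"
      by (intro sum_diff2_symmetric) (simp_all add: y_vanishes_inner)
    then show ?thesis
      by (simp add: diff2_mult w_def power2_eq_square algebra_simps)
  qed
  finally show ?thesis .
qed

lemma sum_convection_lower_bound:
  assumes "h > 0" and "\<eta> > 0" and "\<And>j. \<bar>\<beta> j\<bar> \<le> B"
  shows "(\<Sum>j=lo..hi. \<beta> j * y j * central_diff y j) / h
           \<ge> - \<eta> / 4 * (\<Sum>j=lo..hi. (bdiff y j)\<^sup>2) / h\<^sup>2 - 4 * B\<^sup>2 / \<eta> * (\<Sum>j=lo..hi. (y j)\<^sup>2)"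
proof -
  define \<epsilon> where "\<epsilon> = \<eta> / (16 * h)"
  have \<epsilon>: "\<epsilon> > 0"
    using assms(1,2) by (simp add: \<epsilon>_def)
  have pointwise: "- \<epsilon> * ((bdiff y (j - 1))\<^sup>2 + (bdiff y j)\<^sup>2 + (bdiff y (j + 1))\<^sup>2 + (bdiff y (j + 2))\<^sup>2)
      - B\<^sup>2 / (4 * \<epsilon>) * (y j)\<^sup>2 \<le> \<beta> j * y j * central_diff y j" for j
  proof -
    have "\<bar>central_diff y j * (\<beta> j * y j)\<bar> \<le> \<epsilon> * (central_diff y j)\<^sup>2 + (\<beta> j * y j)\<^sup>2 / (4 * \<epsilon>)"
      using abs_mult_le_Young \<epsilon> by blast
    moreover have "\<epsilon> * (central_diff y j)\<^sup>2
        \<le> \<epsilon> * ((bdiff y (j - 1))\<^sup>2 + (bdiff y j)\<^sup>2 + (bdiff y (j + 1))\<^sup>2 + (bdiff y (j + 2))\<^sup>2)"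
      using central_diff_sq_le \<epsilon> by (intro mult_left_mono) auto
    moreover have "(\<beta> j * y j)\<^sup>2 / (4 * \<epsilon>) \<le> B\<^sup>2 / (4 * \<epsilon>) * (y j)\<^sup>2"
      using power2_mult_le_of_abs_le[OF assms(3)] \<epsilon> by (simp add: divide_right_mono)
    ultimately show ?thesis
      using abs_ge_minus_self[of "central_diff y j * (\<beta> j * y j)"] by (simp add: algebra_simps)
  qed
  have "- 4 * \<epsilon> * (\<Sum>j=lo..hi. (bdiff y j)\<^sup>2) - B\<^sup>2 / (4 * \<epsilon>) * (\<Sum>j=lo..hi. (y j)\<^sup>2)
      = (\<Sum>j=lo..hi. - \<epsilon> * ((bdiff y (j - 1))\<^sup>2 + (bdiff y j)\<^sup>2 + (bdiff y (j + 1))\<^sup>2 + (bdiff y (j + 2))\<^sup>2)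
          - B\<^sup>2 / (4 * \<epsilon>) * (y j)\<^sup>2)"
    using sum_bdiff_sq_shift[of "-1"] sum_bdiff_sq_shift[of 1] sum_bdiff_sq_shift[of 2]
    by (simp only: sum.distrib sum_subtractf flip: sum_distrib_left) simp
  also have "\<dots> \<le> (\<Sum>j=lo..hi. \<beta> j * y j * central_diff y j)"
    by (rule sum_mono) (rule pointwise)
  finally have "(- 4 * \<epsilon> * (\<Sum>j=lo..hi. (bdiff y j)\<^sup>2) - B\<^sup>2 / (4 * \<epsilon>) * (\<Sum>j=lo..hi. (y j)\<^sup>2)) / h
      \<le> (\<Sum>j=lo..hi. \<beta> j * y j * central_diff y j) / h"
    using assms(1) by (simp add: divide_right_mono)
  moreover have "(- 4 * \<epsilon> * (\<Sum>j=lo..hi. (bdiff y j)\<^sup>2) - B\<^sup>2 / (4 * \<epsilon>) * (\<Sum>j=lo..hi. (y j)\<^sup>2)) / h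
      = - \<eta> / 4 * (\<Sum>j=lo..hi. (bdiff y j)\<^sup>2) / h\<^sup>2 - 4 * B\<^sup>2 / \<eta> * (\<Sum>j=lo..hi. (y j)\<^sup>2)"
    using assms(1,2) by (simp add: \<epsilon>_def field_simps power2_eq_square)
  ultimately show ?thesis
    by simp
qed

lemma sum_fd4_op_coercive:
  assumes "h > 0" and "\<eta> > 0" and "\<And>j. \<eta> \<le> \<alpha> j" and "\<And>j. \<bar>\<alpha> j - \<alpha> (j - 1)\<bar> \<le> L * h"
    and "\<And>j. \<bar>\<beta> j\<bar> \<le> B" and "\<And>j. \<bar>\<rho> j\<bar> \<le> R"
  shows "(\<Sum>j=lo..hi. y j * fd4_op h \<alpha> \<beta> \<rho> y j)
           \<ge> \<eta> / 4 * (\<Sum>j=lo..hi. (bdiff y j)\<^sup>2) / h\<^sup>2 - (L\<^sup>2 / \<eta> + 4 * B\<^sup>2 / \<eta> + R) * (\<Sum>j=lo..hi. (y j)\<^sup>2)"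
proof -
  define D where "D = (\<Sum>j=lo..hi. (bdiff y j)\<^sup>2)"
  define Y where "Y = (\<Sum>j=lo..hi. (y j)\<^sup>2)"
  have "\<eta> / 2 * D / h\<^sup>2 - L\<^sup>2 / (2 * \<eta>) * Y \<le> (\<Sum>j=lo..hi. \<alpha> j * y j * - diff2 y j) / h\<^sup>2"
  proof -
    have "\<eta> / 2 * D / h\<^sup>2 - L\<^sup>2 / (2 * \<eta>) * Y = (\<eta> / 2 * D - (L * h)\<^sup>2 / (2 * \<eta>) * Y) / h\<^sup>2"
      using assms(1) by (simp add: field_simps power_mult_distrib)
    also have "\<dots> \<le> (\<Sum>j=lo..hi. \<alpha> j * y j * - diff2 y j) / h\<^sup>2"
      using sum_diffusion_lower_bound[of \<eta> \<alpha> "L * h"] assms(2-4)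
      by (intro divide_right_mono) (simp_all add: D_def Y_def)
    finally show ?thesis .
  qed
  moreover have "- L\<^sup>2 / (12 * \<eta>) * Y \<le> (\<Sum>j=lo..hi. \<alpha> j * y j * diff2 (diff2 y) j) / (12 * h\<^sup>2)"
  proof -
    have "- L\<^sup>2 / (12 * \<eta>) * Y = (- (L * h)\<^sup>2 / \<eta> * Y) / (12 * h\<^sup>2)"
      using assms(1) by (simp add: field_simps power_mult_distrib)
    also have "\<dots> \<le> (\<Sum>j=lo..hi. \<alpha> j * y j * diff2 (diff2 y) j) / (12 * h\<^sup>2)"
      using sum_fourth_order_lower_bound[of \<eta> \<alpha> "L * h"] assms(2-4)
      by (intro divide_right_mono) (simp_all add: Y_def)
    finally show ?thesis .
  qed
  moreover have "- \<eta> / 4 * D / h\<^sup>2 - 4 * B\<^sup>2 / \<eta> * Y \<le> (\<Sum>j=lo..hi. \<beta> j * y j * central_diff y j) / h"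
    using sum_convection_lower_bound[OF assms(1,2,5)] by (simp add: D_def Y_def)
  moreover have "- R * Y \<le> (\<Sum>j=lo..hi. \<rho> j * (y j)\<^sup>2)"
  proof -
    have "- R * (y j)\<^sup>2 \<le> \<rho> j * (y j)\<^sup>2" for j
      using assms(6)[of j] by (intro mult_right_mono) auto
    then show ?thesis
      unfolding Y_def sum_distrib_left by (intro sum_mono)
  qed
  moreover have "\<eta> / 4 * D / h\<^sup>2 - (L\<^sup>2 / \<eta> + 4 * B\<^sup>2 / \<eta> + R) * Y
      \<le> (\<eta> / 2 * D / h\<^sup>2 - L\<^sup>2 / (2 * \<eta>) * Y) + - L\<^sup>2 / (12 * \<eta>) * Y
        + (- \<eta> / 4 * D / h\<^sup>2 - 4 * B\<^sup>2 / \<eta> * Y) + - R * Y"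
    using assms(2) by (simp add: Y_def sum_nonneg field_simps)
  ultimately show ?thesis
    unfolding sum_mult_fd4_op D_def Y_def by linarith
qed

end


text \<open>The hypotheses on a, b, r hold only on the open interval, i.e. at the grid points
  with index in 1..J; clamping the index extends the sampled coefficients to all of \<int> without
  leaving that interval, and changes nothing where the zero-extended vector is nonzero.\<close>

definition clamped_grid :: "real \<Rightarrow> real \<Rightarrow> nat \<Rightarrow> int \<Rightarrow> real" where
  "clamped_grid Xmin Xmax J j = grid Xmin Xmax J (max 1 (min (int J) j))"

lemma mesh_pos: "Xmin < Xmax \<Longrightarrow> 0 < mesh Xmin Xmax J"
  by (simp add: mesh_def)

lemma grid_mem_interval:
  assumes "Xmin < Xmax" and "1 \<le> j" and "j \<le> int J"
  shows "grid Xmin Xmax J j \<in> {Xmin<..<Xmax}"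
proof -
  have h: "0 < mesh Xmin Xmax J" "(real J + 1) * mesh Xmin Xmax J = Xmax - Xmin"
    using assms(1) by (simp_all add: mesh_def)
  have "real_of_int j * mesh Xmin Xmax J < (real J + 1) * mesh Xmin Xmax J"
    using assms(3) h(1) by (intro mult_strict_right_mono) auto
  moreover have "0 < real_of_int j * mesh Xmin Xmax J"
    using assms(2) h(1) by simp
  ultimately show ?thesis
    using h(2) by (simp add: grid_def)
qed

lemma clamped_grid_mem_interval:
  "Xmin < Xmax \<Longrightarrow> 1 \<le> J \<Longrightarrow> clamped_grid Xmin Xmax J j \<in> {Xmin<..<Xmax}"
  unfolding clamped_grid_def by (rule grid_mem_interval) auto

lemma clamped_grid_eq_grid: "1 \<le> j \<Longrightarrow> j \<le> int J \<Longrightarrow> clamped_grid Xmin Xmax J j = grid Xmin Xmax J j"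
  by (simp add: clamped_grid_def)

lemma clamped_grid_step:
  assumes "Xmin < Xmax"
  shows "\<bar>clamped_grid Xmin Xmax J j - clamped_grid Xmin Xmax J (j - 1)\<bar> \<le> mesh Xmin Xmax J"
proof -
  define k where "k = max 1 (min (int J) j) - max 1 (min (int J) (j - 1))"
  have "\<bar>real_of_int k\<bar> \<le> 1"
    unfolding k_def by linarith
  then have "\<bar>real_of_int k\<bar> * mesh Xmin Xmax J \<le> mesh Xmin Xmax J"
    using mesh_pos[OF assms] by (simp add: mult_left_le_one_le)
  moreover have "clamped_grid Xmin Xmax J j - clamped_grid Xmin Xmax J (j - 1) = real_of_int k * mesh Xmin Xmax J"
    by (simp add: clamped_grid_def grid_def k_def algebra_simps)
  ultimately show ?thesis
    using mesh_pos[OF assms] by (simp add: abs_mult abs_of_pos)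
qed

lemma ext_vanishes: "j \<notin> {1..int J} \<Longrightarrow> ext J x j = 0"
  by (auto simp: ext_def)

lemma Atilde_eq_fd4_op:
  assumes "1 \<le> j" and "j \<le> int J"
  shows "Atilde a b r Xmin Xmax J t x j
    = fd4_op (mesh Xmin Xmax J) (\<lambda>j. a t (clamped_grid Xmin Xmax J j)) (\<lambda>j. b t (clamped_grid Xmin Xmax J j))
        (\<lambda>j. r t (clamped_grid Xmin Xmax J j)) (ext J x) j"
proof -
  define y where "y = ext J x"
  define h where "h = mesh Xmin Xmax J"
  have "(- y (j - 1) + 2 * y j - y (j + 1)) / h\<^sup>2
      + (y (j - 2) - 4 * y (j - 1) + 6 * y j - 4 * y (j + 1) + y (j + 2)) / (12 * h\<^sup>2)
      = diff2 (diff2 y) j / (12 * h\<^sup>2) - diff2 y j / h\<^sup>2"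
    by (cases "h = 0") (simp_all add: diff2_def field_simps)
  moreover have "(y (j + 1) - y (j - 1)) / (2 * h) + (y (j - 2) - 2 * y (j - 1) + 2 * y (j + 1) - y (j + 2)) / (12 * h)
      = central_diff y j / h"
    by (cases "h = 0") (simp_all add: central_diff_def field_simps)
  ultimately show ?thesis
    using assms unfolding Atilde_def fd4_op_def Let_def y_def[symmetric] h_def[symmetric]
    by (simp add: clamped_grid_eq_grid)
qed

lemma innerJ_Atilde_eq_sum:
  "innerJ J x (Atilde a b r Xmin Xmax J t x)
    = (\<Sum>j = -1..int J + 2. ext J x j * fd4_op (mesh Xmin Xmax J) (\<lambda>j. a t (clamped_grid Xmin Xmax J j))
        (\<lambda>j. b t (clamped_grid Xmin Xmax J j)) (\<lambda>j. r t (clamped_grid Xmin Xmax J j)) (ext J x) j)"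
  unfolding innerJ_def
  by (rule sum.mono_neutral_cong_left) (auto simp: ext_vanishes Atilde_eq_fd4_op ext_def)

lemma normJ_sq_eq_sum:
  "normJ_sq J x = (\<Sum>j = -1..int J + 2. (ext J x j)\<^sup>2)"
  unfolding normJ_sq_def
  by (rule sum.mono_neutral_cong_left) (auto simp: ext_vanishes ext_def)

lemma Nnorm_scaled_sq:
  "(Nnorm J (\<lambda>j. x j / c))\<^sup>2 = (\<Sum>j = -1..int J + 2. (bdiff (ext J x) j)\<^sup>2) / c\<^sup>2"
proof -
  have "(\<Sum>j = 1..int J + 1. \<bar>ext J (\<lambda>j. x j / c) j - ext J (\<lambda>j. x j / c) (j - 1)\<bar>\<^sup>2)
      = (\<Sum>j = 1..int J + 1. (bdiff (ext J x) j)\<^sup>2 / c\<^sup>2)"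
    by (intro sum.cong) (auto simp: ext_def bdiff_def power_divide simp flip: diff_divide_distrib)
  also have "\<dots> = (\<Sum>j = -1..int J + 2. (bdiff (ext J x) j)\<^sup>2 / c\<^sup>2)"
    by (rule sum.mono_neutral_left) (auto simp: bdiff_def ext_def)
  finally show ?thesis
    by (simp add: Nnorm_def sum_nonneg sum_divide_distrib)
qed

lemma innerJ_Atilde_coercive:
  assumes "Xmin < Xmax" and "1 \<le> J" and "\<eta>0 > 0"
    and "\<And>x. x \<in> {Xmin<..<Xmax} \<Longrightarrow> \<eta>0 \<le> a t x"
    and "\<And>x y. x \<in> {Xmin<..<Xmax} \<Longrightarrow> y \<in> {Xmin<..<Xmax} \<Longrightarrow> \<bar>a t x - a t y\<bar> \<le> L * \<bar>x - y\<bar>"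
    and "\<And>x. x \<in> {Xmin<..<Xmax} \<Longrightarrow> \<bar>b t x\<bar> \<le> B"
    and "\<And>x. x \<in> {Xmin<..<Xmax} \<Longrightarrow> \<bar>r t x\<bar> \<le> R"
  shows "innerJ J x (Atilde a b r Xmin Xmax J t x)
           \<ge> \<eta>0 / 4 * (Nnorm J (\<lambda>j. x j / mesh Xmin Xmax J))\<^sup>2 - (L\<^sup>2 / \<eta>0 + 4 * B\<^sup>2 / \<eta>0 + R) * normJ_sq J x"
proof -
  let ?h = "mesh Xmin Xmax J" and ?g = "clamped_grid Xmin Xmax J"
  have g: "?g j \<in> {Xmin<..<Xmax}" for j
    using assms(1,2) by (rule clamped_grid_mem_interval)
  have "\<bar>a t (?g j) - a t (?g (j - 1))\<bar> \<le> \<bar>L\<bar> * ?h" for j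
  proof -
    have "\<bar>a t (?g j) - a t (?g (j - 1))\<bar> \<le> L * \<bar>?g j - ?g (j - 1)\<bar>"
      using assms(5) g by blast
    also have "\<dots> \<le> \<bar>L\<bar> * ?h"
      using clamped_grid_step[OF assms(1), of J j] by (meson abs_ge_self abs_ge_zero mult_mono order.trans)
    finally show ?thesis .
  qed
  moreover have "ext J x j = 0" if "j \<notin> {-1 + 2..int J + 2 - 2}" for j
    using that by (simp add: ext_vanishes)
  ultimately have "\<eta>0 / 4 * (\<Sum>j = -1..int J + 2. (bdiff (ext J x) j)\<^sup>2) / ?h\<^sup>2
      - (\<bar>L\<bar>\<^sup>2 / \<eta>0 + 4 * B\<^sup>2 / \<eta>0 + R) * (\<Sum>j = -1..int J + 2. (ext J x j)\<^sup>2)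
    \<le> (\<Sum>j = -1..int J + 2. ext J x j
          * fd4_op ?h (\<lambda>j. a t (?g j)) (\<lambda>j. b t (?g j)) (\<lambda>j. r t (?g j)) (ext J x) j)"
    using mesh_pos[OF assms(1)] assms(3,4,6,7) g by (intro sum_fd4_op_coercive) auto
  then show ?thesis
    by (simp add: innerJ_Atilde_eq_sum normJ_sq_eq_sum Nnorm_scaled_sq)
qed

theorem lemma5p3:
  fixes a b r :: "real \<Rightarrow> real \<Rightarrow> real"
    and Xmin Xmax T \<eta>0 L :: real
  assumes "Xmin < Xmax" and "T > 0"
    and "\<exists>M. \<forall>t\<in>{0<..<T}. \<forall>x\<in>{Xmin<..<Xmax}. \<bar>a t x\<bar> \<le> M"
    and "\<exists>M. \<forall>t\<in>{0<..<T}. \<forall>x\<in>{Xmin<..<Xmax}. \<bar>b t x\<bar> \<le> M"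
    and "\<exists>M. \<forall>t\<in>{0<..<T}. \<forall>x\<in>{Xmin<..<Xmax}. \<bar>r t x\<bar> \<le> M"
    and "\<eta>0 > 0"
    and "\<forall>t\<in>{0<..<T}. \<forall>x\<in>{Xmin<..<Xmax}. a t x \<ge> \<eta>0"
    and "\<forall>t\<in>{0<..<T}. \<forall>x\<in>{Xmin<..<Xmax}. \<forall>y\<in>{Xmin<..<Xmax}.
           \<bar>a t x - a t y\<bar> \<le> L * \<bar>x - y\<bar>"
  shows "\<exists>\<eta>2 \<gamma>2. \<eta>2 > 0 \<and> \<gamma>2 \<ge> 0 \<and>
     (\<forall>J::nat. J \<ge> 1 \<longrightarrow> (\<forall>t\<in>{0<..<T}. \<forall>x :: int \<Rightarrow> real.
        innerJ J x (Atilde a b r Xmin Xmax J t x)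
          \<ge> \<eta>2 * (Nnorm J (\<lambda>j. x j / mesh Xmin Xmax J))\<^sup>2 - \<gamma>2 * normJ_sq J x))"
proof -
  obtain B where B: "\<forall>t\<in>{0<..<T}. \<forall>x\<in>{Xmin<..<Xmax}. \<bar>b t x\<bar> \<le> B"
    using assms(4) by blast
  obtain R where R: "\<forall>t\<in>{0<..<T}. \<forall>x\<in>{Xmin<..<Xmax}. \<bar>r t x\<bar> \<le> R"
    using assms(5) by blast
  define \<gamma> where "\<gamma> = L\<^sup>2 / \<eta>0 + 4 * B\<^sup>2 / \<eta>0 + \<bar>R\<bar>"
  have "innerJ J x (Atilde a b r Xmin Xmax J t x)
      \<ge> \<eta>0 / 4 * (Nnorm J (\<lambda>j. x j / mesh Xmin Xmax J))\<^sup>2 - \<gamma> * normJ_sq J x"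
    if "1 \<le> J" and "t \<in> {0<..<T}" for J t x
    unfolding \<gamma>_def using assms(1) that(1) assms(6)
    by (rule innerJ_Atilde_coercive) (use assms(7,8) B R that(2) in \<open>auto intro: order.trans[OF _ abs_ge_self]\<close>)
  moreover have "\<gamma> \<ge> 0"
    using assms(6) by (simp add: \<gamma>_def)
  ultimately show ?thesis
    using assms(6) by (intro exI[of _ "\<eta>0 / 4"] exI[of _ \<gamma>]) auto
qed

end
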